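(* Let $n\ge2$, $1\le r\le n-1$, $\alpha,\beta,\gamma\in\mathbb{Z}_2^{n-r}$, $\alpha',\beta',\gamma'\in\mathbb{Z}_2^{r}$, $a=\alpha_{n-r-1}\oplus\beta_{n-r-1}\oplus\gamma_{n-r-1}$ and $a'=\alpha'_{r-1}\oplus\beta'_{r-1}\oplus\gamma'_{r-1}$. Then $$\mathrm{adp}^{\mathrm{XR}}_r(\alpha'\|\alpha,\beta'\|\beta\to\gamma\|\gamma')=\mathrm{padp}_{a',0}(\alpha,\beta,\gamma^{[a]})\,\mathrm{cadp}_a(\alpha'^{[a']},\beta',\gamma')+\mathrm{padp}_{\overline{a'},1}(\alpha,\beta,\gamma^{[a]})\,\mathrm{cadp}_a(\overline{\alpha'}^{[a']},\overline{\beta'},\gamma'),$$ where $\overline{a'}=a'\oplus1$.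
   Context: For $x\in\mathbb{Z}_2^m$, $x=(x_0,\dots,x_{m-1})$ is identified with the integer $\sum_i x_i2^{m-1-i}$; arithmetic on $\mathbb{Z}_2^n$ is modulo $2^n$. $\oplus$ is bitwise XOR, $x\lll r=(x_r,\dots,x_{n-1},x_0,\dots,x_{r-1})$, $\overline{x}$ is the bitwise complement, $x^{[a]}=x$ if $a=0$ and $\overline{x}$ if $a=1$, and $\alpha\|\beta$ is concatenation ($\alpha$ in the most significant positions). $\mathrm{adp}^{\mathrm{XR}}_r(\alpha,\beta\to\gamma)=4^{-n}\#\{(x,y)\in(\mathbb{Z}_2^n)^2: ((x+\alpha)\oplus(y+\beta))\lll r=((x\oplus y)\lll r)+\gamma\}$. Indices $0,\dots,7$ are identified with $\mathbb{Z}_2^3$ via $(p_0,p_1,p_2)\leftrightarrow4p_0+2p_1+p_2$; $e_0,\dots,e_7$ are the standard basis row vectors of $\mathbb{Q}^8$. $A_0$ is $\frac14$ times the $8\times8$ matrix with rows $(4,0,0,1,0,1,1,0)$, $(0,0,0,1,0,1,0,0)$, $(0,0,0,1,0,0,1,0)$, $(0,0,0,1,0,0,0,0)$, $(0,0,0,0,0,1,1,0)$, $(0,0,0,0,0,1,0,0)$, $(0,0,0,0,0,0,1,0)$, $(0,\dots,0)$, and $(A_k)_{i,j}=(A_0)_{i\oplus k,j\oplus k}$. For $\alpha,\beta,\gamma\in\mathbb{Z}_2^m$ let $\omega_i=4\alpha_i+2\beta_i+\gamma_i$. With $L_0=(1,0,1,0,1,0,1,0)$, $L_1=(0,1,0,1,0,1,0,1)$,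 $L_{0,0}=(1,1,0,0,0,0,0,0)$, $L_{0,1}=(0,0,1,1,0,0,0,0)$, $L_{1,0}=(0,0,0,0,1,1,0,0)$, $L_{1,1}=(0,0,0,0,0,0,1,1)$, define $\mathrm{cadp}_c(\alpha,\beta,\gamma)=L_cA_{\omega_0}\cdots A_{\omega_{m-1}}e_0^T$ and $\mathrm{padp}_{a,b}(\alpha,\beta,\gamma)=L_{a,b}A_{\omega_0}\cdots A_{\omega_{m-1}}e_0^T$. *)

theory Defs
  imports Complex_Main
begin

text \<open>Bit vectors in Z_2^m are lists of booleans of length m; the list
  [x_0, ..., x_(m-1)] has x_0 as the most significant bit.\<close>

definition bv_to_nat :: "bool list \<Rightarrow> nat" where
  "bv_to_nat xs = (\<Sum>i<length xs. of_bool (xs ! i) * 2 ^ (length xs - 1 - i))"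

definition nat_to_bv :: "nat \<Rightarrow> nat \<Rightarrow> bool list" where
  "nat_to_bv m k = map (\<lambda>i. bit k (m - 1 - i)) [0..<m]"

definition bv_add :: "nat \<Rightarrow> bool list \<Rightarrow> bool list \<Rightarrow> bool list" where
  "bv_add n x y = nat_to_bv n ((bv_to_nat x + bv_to_nat y) mod 2 ^ n)"

definition bv_xor :: "bool list \<Rightarrow> bool list \<Rightarrow> bool list" where
  "bv_xor x y = map2 (\<noteq>) x y"

definition bv_not :: "bool list \<Rightarrow> bool list" where
  "bv_not x = map Not x"

definition bv_cond_not :: "bool list \<Rightarrow> bool \<Rightarrow> bool list" where
  "bv_cond_not x a = (if a then bv_not x else x)"

definition bv_rotl :: "bool list \<Rightarrow> nat \<Rightarrow> bool list" where
  "bv_rotl x r = rotate r x"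

definition adpXR :: "nat \<Rightarrow> nat \<Rightarrow> bool list \<Rightarrow> bool list \<Rightarrow> bool list \<Rightarrow> real" where
  "adpXR n r \<alpha> \<beta> \<gamma> = (1 / 4 ^ n) * real (card
     {(x, y). length x = n \<and> length y = n \<and>
        bv_rotl (bv_xor (bv_add n x \<alpha>) (bv_add n y \<beta>)) r
        = bv_add n (bv_rotl (bv_xor x y) r) \<gamma>})"

definition A0_rows :: "real list list" where
  "A0_rows = [[4,0,0,1,0,1,1,0],
              [0,0,0,1,0,1,0,0],
              [0,0,0,1,0,0,1,0],
              [0,0,0,1,0,0,0,0],
              [0,0,0,0,0,1,1,0],
              [0,0,0,0,0,1,0,0],
              [0,0,0,0,0,0,1,0],
              [0,0,0,0,0,0,0,0]]"

definition A0 :: "nat \<Rightarrow> nat \<Rightarrow> real" where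
  "A0 i j = (A0_rows ! i ! j) / 4"

definition Amat :: "nat \<Rightarrow> nat \<Rightarrow> nat \<Rightarrow> real" where
  "Amat k i j = A0 (xor i k) (xor j k)"

fun Aprod_e0 :: "nat list \<Rightarrow> nat \<Rightarrow> real" where
  "Aprod_e0 [] = (\<lambda>i. if i = 0 then 1 else 0)"
| "Aprod_e0 (k # ks) = (\<lambda>i. \<Sum>j<8. Amat k i j * Aprod_e0 ks j)"

definition omegas :: "bool list \<Rightarrow> bool list \<Rightarrow> bool list \<Rightarrow> nat list" where
  "omegas \<alpha> \<beta> \<gamma> = map (\<lambda>i. 4 * of_bool (\<alpha> ! i) + 2 * of_bool (\<beta> ! i) + of_bool (\<gamma> ! i))
                        [0..<length \<alpha>]"

definition Lc :: "bool \<Rightarrow> real list" where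
  "Lc c = (if c then [0,1,0,1,0,1,0,1] else [1,0,1,0,1,0,1,0])"

definition Lab :: "bool \<Rightarrow> bool \<Rightarrow> real list" where
  "Lab a b = (if \<not> a \<and> \<not> b then [1,1,0,0,0,0,0,0]
              else if \<not> a \<and> b then [0,0,1,1,0,0,0,0]
              else if a \<and> \<not> b then [0,0,0,0,1,1,0,0]
              else [0,0,0,0,0,0,1,1])"

definition cadp :: "bool \<Rightarrow> bool list \<Rightarrow> bool list \<Rightarrow> bool list \<Rightarrow> real" where
  "cadp c \<alpha> \<beta> \<gamma> = (\<Sum>i<8. Lc c ! i * Aprod_e0 (omegas \<alpha> \<beta> \<gamma>) i)"

definition padp :: "bool \<Rightarrow> bool \<Rightarrow> bool list \<Rightarrow> bool list \<Rightarrow> bool list \<Rightarrow> real" where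
  "padp a b \<alpha> \<beta> \<gamma> = (\<Sum>i<8. Lab a b ! i * Aprod_e0 (omegas \<alpha> \<beta> \<gamma>) i)"

end

theory Submission imports Defs begin

(* Write X = x' @ x and Y = y' @ y with length x = n - r. Rotation by r swaps the two halves,
   so the defining equation of adpXR splits into (x + alpha) xor (y + beta) = (x xor y) + gamma + c3
   on the low halves and (x' + alpha' + c1) xor (y' + beta' + c2) = (x' xor y') + gamma' on the
   high halves, where c1, c2 are the carries out of x + alpha, y + beta and c3 is the carry out
   of (x' xor y') + gamma'.
   Bit by bit, the triple of carries of the three additions evolves by the matrices A_k (A_0
   counts the one-bit transitions), and a carry-in amounts to complementing the inputs and
   relabelling the carry states by xor. So the number of solutions of either half with prescribed
   carries is a padp or cadp, and adpXR is the sum of padp * cadp over the eight carry triples.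
   Finally A_k e_0 = 0 whenever k has odd parity; this leaves only the two triples with c3 = a
   and c1 xor c2 = a'. *)

lemma length_nat_to_bv [simp]: "length (nat_to_bv m k) = m"
  by (simp add: nat_to_bv_def)

lemma nat_to_bv_mod: "nat_to_bv m (k mod 2 ^ m) = nat_to_bv m k"
  unfolding nat_to_bv_def take_bit_eq_mod [symmetric] by (auto simp: bit_take_bit_iff)

lemma bit_div_exp: "bit (k div 2 ^ q) j = bit k (q + j)" for k :: nat
  by (simp add: drop_bit_eq_div [symmetric] bit_drop_bit_eq)

lemma nat_to_bv_add: "nat_to_bv (p + q) k = nat_to_bv p (k div 2 ^ q) @ nat_to_bv q k"
proof -
  have "[0..<p + q] = [0..<p] @ map (\<lambda>i. i + p) [0..<q]"
    by (simp add: map_add_upt upt_add_eq_append [of 0 p q] add.commute)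
  moreover have "map (\<lambda>i. bit k (p + q - 1 - i)) [0..<p] = nat_to_bv p (k div 2 ^ q)"
    by (auto simp: nat_to_bv_def bit_div_exp intro!: arg_cong [where f = "bit k"])
  ultimately show ?thesis
    by (simp add: nat_to_bv_def comp_def)
qed

lemma bv_to_nat_Cons: "bv_to_nat (x # xs) = of_bool x * 2 ^ length xs + bv_to_nat xs"
  unfolding bv_to_nat_def length_Cons sum.lessThan_Suc_shift by simp

lemma bv_to_nat_Nil [simp]: "bv_to_nat [] = 0"
  by (simp add: bv_to_nat_def)

lemma bv_to_nat_append: "bv_to_nat (xs @ ys) = bv_to_nat xs * 2 ^ length ys + bv_to_nat ys"
  by (induction xs) (simp_all add: bv_to_nat_Cons power_add algebra_simps)

lemma bv_to_nat_less: "bv_to_nat xs < 2 ^ length xs"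
  by (induction xs) (auto simp: bv_to_nat_Cons)

definition add_carry :: "bool list \<Rightarrow> bool list \<Rightarrow> bool \<Rightarrow> bool list" where
  "add_carry xs ys c = nat_to_bv (length xs) (bv_to_nat xs + bv_to_nat ys + of_bool c)"

definition carry_out :: "bool list \<Rightarrow> bool list \<Rightarrow> bool \<Rightarrow> bool" where
  "carry_out xs ys c \<longleftrightarrow> 2 ^ length xs \<le> bv_to_nat xs + bv_to_nat ys + of_bool c"

lemma length_add_carry [simp]: "length (add_carry xs ys c) = length xs"
  by (simp add: add_carry_def)

lemma bv_add_eq_add_carry: "length x = n \<Longrightarrow> bv_add n x y = add_carry x y False"
  by (simp add: bv_add_def add_carry_def nat_to_bv_mod)

lemma div_eq_carry_out:
  assumes "length ys = length xs"
  shows "(bv_to_nat xs + bv_to_nat ys + of_bool c) div 2 ^ length xs = of_bool (carry_out xs ys c)"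
proof -
  have "bv_to_nat xs + bv_to_nat ys + of_bool c < 2 * 2 ^ length xs"
    using bv_to_nat_less [of xs] bv_to_nat_less [of ys] assms by (cases c) auto
  then show ?thesis
    by (cases "carry_out xs ys c") (auto simp: carry_out_def intro: div_nat_eqI)
qed

lemma add_carry_append:
  assumes "length ys1 = length xs1" "length ys2 = length xs2"
  shows "add_carry (xs1 @ xs2) (ys1 @ ys2) c
           = add_carry xs1 ys1 (carry_out xs2 ys2 c) @ add_carry xs2 ys2 c"
    and "carry_out (xs1 @ xs2) (ys1 @ ys2) c = carry_out xs1 ys1 (carry_out xs2 ys2 c)"
proof -
  define q where "q = length xs2"
  define low where "low = bv_to_nat xs2 + bv_to_nat ys2 + of_bool c"
  define S where "S = (bv_to_nat xs1 + bv_to_nat ys1) * 2 ^ q + low"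
  have S: "bv_to_nat (xs1 @ xs2) + bv_to_nat (ys1 @ ys2) + of_bool c = S"
    using assms by (simp add: bv_to_nat_append S_def low_def q_def algebra_simps)
  have S_div: "S div 2 ^ q = bv_to_nat xs1 + bv_to_nat ys1 + of_bool (carry_out xs2 ys2 c)"
    using div_eq_carry_out [OF assms(2)] by (simp add: S_def low_def q_def)
  have "add_carry (xs1 @ xs2) (ys1 @ ys2) c = nat_to_bv (length xs1 + q) S"
    unfolding add_carry_def S by (simp add: q_def)
  also have "\<dots> = nat_to_bv (length xs1) (S div 2 ^ q) @ nat_to_bv q S"
    by (rule nat_to_bv_add)
  also have "nat_to_bv q S = nat_to_bv q low"
    by (metis S_def mod_mult_self3 nat_to_bv_mod)
  also have "nat_to_bv (length xs1) (S div 2 ^ q) = add_carry xs1 ys1 (carry_out xs2 ys2 c)"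
    by (simp add: S_div add_carry_def)
  also have "nat_to_bv q low = add_carry xs2 ys2 c"
    by (simp add: add_carry_def low_def q_def)
  finally show "add_carry (xs1 @ xs2) (ys1 @ ys2) c
           = add_carry xs1 ys1 (carry_out xs2 ys2 c) @ add_carry xs2 ys2 c" .
  have "carry_out (xs1 @ xs2) (ys1 @ ys2) c \<longleftrightarrow> 2 ^ (length xs1 + q) \<le> S"
    unfolding carry_out_def S by (simp add: q_def)
  also have "\<dots> \<longleftrightarrow> 2 ^ length xs1 \<le> S div 2 ^ q"
    by (simp add: less_eq_div_iff_mult_less_eq power_add)
  also have "\<dots> \<longleftrightarrow> carry_out xs1 ys1 (carry_out xs2 ys2 c)"
    by (simp add: S_div carry_out_def)
  finally show "carry_out (xs1 @ xs2) (ys1 @ ys2) c = carry_out xs1 ys1 (carry_out xs2 ys2 c)" .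
qed

definition maj :: "bool \<Rightarrow> bool \<Rightarrow> bool \<Rightarrow> bool" where
  "maj p q s \<longleftrightarrow> p \<and> q \<or> p \<and> s \<or> q \<and> s"

lemma add_carry_single: "add_carry [x] [y] c = [x \<noteq> (y \<noteq> c)]"
  by (cases x; cases y; cases c) (simp_all add: add_carry_def bv_to_nat_Cons nat_to_bv_def bit_0)

lemma carry_out_single: "carry_out [x] [y] c = maj x y c"
  by (cases x; cases y; cases c) (simp_all add: carry_out_def bv_to_nat_Cons maj_def)

lemma add_carry_Nil: "add_carry [] [] c = []"
  by (simp add: add_carry_def nat_to_bv_def)

lemma carry_out_Nil: "carry_out [] [] c = c"
  by (simp add: carry_out_def)

lemma add_carry_Cons:
  assumes "length ys = length xs"
  shows "add_carry (x # xs) (y # ys) c = (x \<noteq> (y \<noteq> carry_out xs ys c)) # add_carry xs ys c"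
    and "carry_out (x # xs) (y # ys) c = maj x y (carry_out xs ys c)"
  using add_carry_append [of "[y]" "[x]" ys xs c] assms
  by (simp_all add: add_carry_single carry_out_single)

lemma length_bv_xor [simp]: "length (bv_xor x y) = min (length x) (length y)"
  by (simp add: bv_xor_def)

lemma bv_xor_Cons: "bv_xor (x # xs) (y # ys) = (x \<noteq> y) # bv_xor xs ys"
  by (simp add: bv_xor_def)

lemma bv_xor_append: "length x1 = length y1 \<Longrightarrow> bv_xor (x1 @ x2) (y1 @ y2) = bv_xor x1 y1 @ bv_xor x2 y2"
  by (simp add: bv_xor_def)

definition bitvecs :: "nat \<Rightarrow> bool list set" where
  "bitvecs m = {xs. length xs = m}"

lemma sum_bitvecs_0: "sum f (bitvecs 0) = f []"
  by (simp add: bitvecs_def)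

lemma sum_bitvecs_Suc: "sum f (bitvecs (Suc m)) = (\<Sum>xs\<in>bitvecs m. \<Sum>b\<in>UNIV. f (b # xs))"
proof -
  have "bitvecs (Suc m) = (\<lambda>(xs, b). b # xs) ` (bitvecs m \<times> UNIV)"
    by (auto simp: bitvecs_def image_iff length_Suc_conv)
  moreover have "inj_on (\<lambda>(xs, b). b # xs) (bitvecs m \<times> UNIV)"
    by (auto simp: inj_on_def)
  ultimately show ?thesis
    by (simp add: sum.reindex sum.cartesian_product split_def)
qed

lemma sum_bitvecs_append:
  "sum f (bitvecs (p + q)) = (\<Sum>xs\<in>bitvecs p. \<Sum>ys\<in>bitvecs q. f (xs @ ys))"
proof (induction p arbitrary: f)
  case 0
  then show ?case by (simp add: sum_bitvecs_0)
next
  case (Suc p)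
  have "sum f (bitvecs (Suc p + q)) = (\<Sum>zs\<in>bitvecs (p + q). \<Sum>b\<in>UNIV. f (b # zs))"
    by (simp add: sum_bitvecs_Suc)
  also have "\<dots> = (\<Sum>b\<in>UNIV. \<Sum>xs\<in>bitvecs p. \<Sum>ys\<in>bitvecs q. f (b # xs @ ys))"
    by (subst sum.swap) (simp add: Suc.IH)
  also have "\<dots> = (\<Sum>xs\<in>bitvecs (Suc p). \<Sum>ys\<in>bitvecs q. f (xs @ ys))"
    by (subst sum_bitvecs_Suc, subst sum.swap) simp
  finally show ?case .
qed

lemma finite_bitvecs [simp]: "finite (bitvecs m)"
  using finite_lists_length_eq [of "UNIV :: bool set" m] by (simp add: bitvecs_def)

lemma card_pairs_eq_sum:
  "real (card {(x, y). length x = n \<and> length y = n \<and> P x y})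
     = (\<Sum>x\<in>bitvecs n. \<Sum>y\<in>bitvecs n. of_bool (P x y))"
proof -
  have "{(x, y). length x = n \<and> length y = n \<and> P x y} = {z \<in> bitvecs n \<times> bitvecs n. case_prod P z}"
    by (auto simp: bitvecs_def)
  then have "real (card {(x, y). length x = n \<and> length y = n \<and> P x y})
      = (\<Sum>z\<in>bitvecs n \<times> bitvecs n. of_bool (case_prod P z))"
    by (simp only: real_of_card sum.inter_filter finite_cartesian_product finite_bitvecs of_bool_def)
  then show ?thesis
    by (simp only: sum.cartesian_product prod.case_distrib)
qed

definition idx3 :: "bool \<Rightarrow> bool \<Rightarrow> bool \<Rightarrow> nat" where
  "idx3 p q s = 4 * of_bool p + 2 * of_bool q + of_bool s"

lemma idx3_simps [simp]:
  "idx3 False False False = 0" "idx3 False False True = 1"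
  "idx3 False True False = 2" "idx3 False True True = 3"
  "idx3 True False False = 4" "idx3 True False True = 5"
  "idx3 True True False = 6" "idx3 True True True = 7"
  by (simp_all add: idx3_def)

lemma idx3_less: "idx3 p q s < 8"
  by (cases p; cases q; cases s) simp_all

lemma idx3_xor: "idx3 (p \<noteq> p') (q \<noteq> q') (s \<noteq> s') = xor (idx3 p q s) (idx3 p' q' s')"
  by (cases p; cases q; cases s; cases p'; cases q'; cases s') simp_all

lemma less_8_cases: "(i::nat) < 8 \<longleftrightarrow> i = 0 \<or> i = 1 \<or> i = 2 \<or> i = 3 \<or> i = 4 \<or> i = 5 \<or> i = 6 \<or> i = 7"
  by auto

text \<open>This is where the matrix A_0 comes from: for one bit position with input bits a, b, g and
  incoming carries c1, c2, c3, it counts the choices of the bits of x and y that satisfy the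
  equation in that position and produce the outgoing carries encoded by i.\<close>
lemma one_bit_transitions:
  "i < 8 \<Longrightarrow> (\<Sum>xb\<in>UNIV. \<Sum>yb\<in>UNIV.
            of_bool (((xb \<noteq> (a \<noteq> c1)) \<noteq> (yb \<noteq> (b \<noteq> c2)) \<longleftrightarrow> (xb \<noteq> yb) \<noteq> (g \<noteq> c3))
                     \<and> idx3 (maj xb a c1) (maj yb b c2) (maj (xb \<noteq> yb) g c3) = i))
       = 4 * Amat (idx3 a b g) i (idx3 c1 c2 c3)"
  unfolding less_8_cases
  by (cases a; cases b; cases g; cases c1; cases c2; cases c3; elim disjE;
      simp add: maj_def Amat_def A0_def A0_rows_def UNIV_bool)

definition xor_add_eq ::
    "bool \<Rightarrow> bool \<Rightarrow> bool \<Rightarrow> bool list \<Rightarrow> bool list \<Rightarrow> bool list \<Rightarrow> bool list \<Rightarrow> bool list \<Rightarrow> bool" where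
  "xor_add_eq s1 s2 s3 \<alpha> \<beta> \<gamma> x y \<longleftrightarrow>
     bv_xor (add_carry x \<alpha> s1) (add_carry y \<beta> s2) = add_carry (bv_xor x y) \<gamma> s3"

definition carry_state ::
    "bool \<Rightarrow> bool \<Rightarrow> bool \<Rightarrow> bool list \<Rightarrow> bool list \<Rightarrow> bool list \<Rightarrow> bool list \<Rightarrow> bool list \<Rightarrow> nat" where
  "carry_state s1 s2 s3 \<alpha> \<beta> \<gamma> x y =
     idx3 (carry_out x \<alpha> s1) (carry_out y \<beta> s2) (carry_out (bv_xor x y) \<gamma> s3)"

lemma carry_state_less: "carry_state s1 s2 s3 \<alpha> \<beta> \<gamma> x y < 8"
  by (simp add: carry_state_def idx3_less)

lemma xor_add_eq_Nil: "xor_add_eq s1 s2 s3 [] [] [] [] []"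
  by (simp add: xor_add_eq_def add_carry_Nil bv_xor_def)

lemma carry_state_Nil: "carry_state s1 s2 s3 [] [] [] [] [] = idx3 s1 s2 s3"
  by (simp add: carry_state_def carry_out_Nil bv_xor_def)

lemma xor_add_eq_Cons:
  fixes s1 s2 s3 :: bool and x y \<alpha> \<beta> \<gamma> :: "bool list"
  assumes "length \<beta> = length \<alpha>" "length \<gamma> = length \<alpha>" "length x = length \<alpha>" "length y = length \<alpha>"
  defines "c1 \<equiv> carry_out x \<alpha> s1" and "c2 \<equiv> carry_out y \<beta> s2"
    and "c3 \<equiv> carry_out (bv_xor x y) \<gamma> s3"
  shows "xor_add_eq s1 s2 s3 (a # \<alpha>) (b # \<beta>) (g # \<gamma>) (xb # x) (yb # y) \<longleftrightarrow>
           xor_add_eq s1 s2 s3 \<alpha> \<beta> \<gamma> x y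
           \<and> ((xb \<noteq> (a \<noteq> c1)) \<noteq> (yb \<noteq> (b \<noteq> c2)) \<longleftrightarrow> (xb \<noteq> yb) \<noteq> (g \<noteq> c3))"
    and "carry_state s1 s2 s3 (a # \<alpha>) (b # \<beta>) (g # \<gamma>) (xb # x) (yb # y) =
           idx3 (maj xb a c1) (maj yb b c2) (maj (xb \<noteq> yb) g c3)"
proof -
  have "length \<alpha> = length x" "length \<beta> = length y" "length \<gamma> = length (bv_xor x y)"
    using assms(1-4) by simp_all
  note add_carry_Cons [OF this(1)] add_carry_Cons [OF this(2)] add_carry_Cons [OF this(3)]
  then show "xor_add_eq s1 s2 s3 (a # \<alpha>) (b # \<beta>) (g # \<gamma>) (xb # x) (yb # y) \<longleftrightarrow>
           xor_add_eq s1 s2 s3 \<alpha> \<beta> \<gamma> x y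
           \<and> ((xb \<noteq> (a \<noteq> c1)) \<noteq> (yb \<noteq> (b \<noteq> c2)) \<longleftrightarrow> (xb \<noteq> yb) \<noteq> (g \<noteq> c3))"
    and "carry_state s1 s2 s3 (a # \<alpha>) (b # \<beta>) (g # \<gamma>) (xb # x) (yb # y) =
           idx3 (maj xb a c1) (maj yb b c2) (maj (xb \<noteq> yb) g c3)"
    by (auto simp: xor_add_eq_def carry_state_def bv_xor_Cons c1_def c2_def c3_def)
qed

lemma omegas_eq: "omegas \<alpha> \<beta> \<gamma> = map (\<lambda>i. idx3 (\<alpha> ! i) (\<beta> ! i) (\<gamma> ! i)) [0..<length \<alpha>]"
  by (simp add: omegas_def idx3_def)

lemma omegas_Cons: "omegas (a # \<alpha>) (b # \<beta>) (g # \<gamma>) = idx3 a b g # omegas \<alpha> \<beta> \<gamma>"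
  by (simp add: omegas_eq upt_conv_Cons map_Suc_upt [symmetric] del: upt_Suc)

fun Aprod :: "nat list \<Rightarrow> (nat \<Rightarrow> real) \<Rightarrow> nat \<Rightarrow> real" where
  "Aprod [] v = v"
| "Aprod (k # ks) v = (\<lambda>i. \<Sum>j<8. Amat k i j * Aprod ks v j)"

definition unit_vec :: "nat \<Rightarrow> nat \<Rightarrow> real" where
  "unit_vec s = (\<lambda>i. if i = s then 1 else 0)"

lemma Aprod_e0_eq_Aprod: "Aprod_e0 ks = Aprod ks (unit_vec 0)"
  by (induction ks) (simp_all add: unit_vec_def)

definition carry_count :: "bool \<Rightarrow> bool \<Rightarrow> bool \<Rightarrow> bool list \<Rightarrow> bool list \<Rightarrow> bool list \<Rightarrow> nat \<Rightarrow> real" where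
  "carry_count s1 s2 s3 \<alpha> \<beta> \<gamma> i = (\<Sum>x\<in>bitvecs (length \<alpha>). \<Sum>y\<in>bitvecs (length \<alpha>).
      of_bool (xor_add_eq s1 s2 s3 \<alpha> \<beta> \<gamma> x y \<and> carry_state s1 s2 s3 \<alpha> \<beta> \<gamma> x y = i))"

lemma sum_lessThan_8_of_bool_eq:
  "(s::nat) < 8 \<Longrightarrow> (\<Sum>j<8. f j * of_bool (P \<and> s = j)) = (f s * of_bool P :: real)"
  by (auto simp: sum.delta [of "{..<8}" s] cong: sum.cong)

lemma count_prepended_bits:
  assumes "length \<beta> = length \<alpha>" "length \<gamma> = length \<alpha>" "length x = length \<alpha>" "length y = length \<alpha>"
    and "i < 8"
  shows "(\<Sum>xb\<in>UNIV. \<Sum>yb\<in>UNIV.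
            of_bool (xor_add_eq s1 s2 s3 (a # \<alpha>) (b # \<beta>) (g # \<gamma>) (xb # x) (yb # y)
              \<and> carry_state s1 s2 s3 (a # \<alpha>) (b # \<beta>) (g # \<gamma>) (xb # x) (yb # y) = i))
       = 4 * Amat (idx3 a b g) i (carry_state s1 s2 s3 \<alpha> \<beta> \<gamma> x y)
          * (of_bool (xor_add_eq s1 s2 s3 \<alpha> \<beta> \<gamma> x y) :: real)"
proof -
  let ?c1 = "carry_out x \<alpha> s1" and ?c2 = "carry_out y \<beta> s2" and ?c3 = "carry_out (bv_xor x y) \<gamma> s3"
  have "(\<Sum>xb\<in>UNIV. \<Sum>yb\<in>UNIV.
            of_bool (xor_add_eq s1 s2 s3 (a # \<alpha>) (b # \<beta>) (g # \<gamma>) (xb # x) (yb # y)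
              \<and> carry_state s1 s2 s3 (a # \<alpha>) (b # \<beta>) (g # \<gamma>) (xb # x) (yb # y) = i))
      = (\<Sum>xb\<in>UNIV. \<Sum>yb\<in>UNIV. of_bool (xor_add_eq s1 s2 s3 \<alpha> \<beta> \<gamma> x y)
          * of_bool (((xb \<noteq> (a \<noteq> ?c1)) \<noteq> (yb \<noteq> (b \<noteq> ?c2)) \<longleftrightarrow> (xb \<noteq> yb) \<noteq> (g \<noteq> ?c3))
                     \<and> idx3 (maj xb a ?c1) (maj yb b ?c2) (maj (xb \<noteq> yb) g ?c3) = i) :: real)"
    using assms(1-4)
    by (simp only: xor_add_eq_Cons conj_assoc of_bool_conj [of "xor_add_eq s1 s2 s3 \<alpha> \<beta> \<gamma> x y"])
  also have "\<dots> = 4 * Amat (idx3 a b g) i (carry_state s1 s2 s3 \<alpha> \<beta> \<gamma> x y)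
                   * of_bool (xor_add_eq s1 s2 s3 \<alpha> \<beta> \<gamma> x y)"
    by (simp only: one_bit_transitions [OF assms(5)] carry_state_def mult.commute
          flip: sum_distrib_left)
  finally show ?thesis .
qed

lemma carry_count_Cons:
  assumes "length \<beta> = length \<alpha>" "length \<gamma> = length \<alpha>" "i < 8"
  shows "carry_count s1 s2 s3 (a # \<alpha>) (b # \<beta>) (g # \<gamma>) i
           = (\<Sum>j<8. 4 * Amat (idx3 a b g) i j * carry_count s1 s2 s3 \<alpha> \<beta> \<gamma> j)"
proof -
  let ?B = "bitvecs (length \<alpha>)"
  let ?eq = "xor_add_eq s1 s2 s3 \<alpha> \<beta> \<gamma>" and ?st = "carry_state s1 s2 s3 \<alpha> \<beta> \<gamma>"
  have "carry_count s1 s2 s3 (a # \<alpha>) (b # \<beta>) (g # \<gamma>) i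
      = (\<Sum>x\<in>?B. \<Sum>y\<in>?B. \<Sum>xb\<in>UNIV. \<Sum>yb\<in>UNIV.
           of_bool (xor_add_eq s1 s2 s3 (a # \<alpha>) (b # \<beta>) (g # \<gamma>) (xb # x) (yb # y)
             \<and> carry_state s1 s2 s3 (a # \<alpha>) (b # \<beta>) (g # \<gamma>) (xb # x) (yb # y) = i))"
    unfolding carry_count_def length_Cons sum_bitvecs_Suc by (intro sum.cong refl) (rule sum.swap)
  also have "\<dots> = (\<Sum>x\<in>?B. \<Sum>y\<in>?B. 4 * Amat (idx3 a b g) i (?st x y) * of_bool (?eq x y))"
    using assms by (intro sum.cong refl count_prepended_bits) (simp_all add: bitvecs_def)
  also have "\<dots> = (\<Sum>x\<in>?B. \<Sum>y\<in>?B. \<Sum>j<8.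
           4 * Amat (idx3 a b g) i j * of_bool (?eq x y \<and> ?st x y = j))"
    by (intro sum.cong refl) (simp only: sum_lessThan_8_of_bool_eq [OF carry_state_less])
  also have "\<dots> = (\<Sum>j<8. 4 * Amat (idx3 a b g) i j * carry_count s1 s2 s3 \<alpha> \<beta> \<gamma> j)"
    unfolding carry_count_def sum_distrib_left
    by (subst sum.swap, subst (2) sum.swap) (rule refl)
  finally show ?thesis .
qed

lemma carry_count_eq_Aprod:
  assumes "length \<beta> = length \<alpha>" "length \<gamma> = length \<alpha>" "i < 8"
  shows "carry_count s1 s2 s3 \<alpha> \<beta> \<gamma> i
           = 4 ^ length \<alpha> * Aprod (omegas \<alpha> \<beta> \<gamma>) (unit_vec (idx3 s1 s2 s3)) i"
  using assms
proof (induction \<alpha> arbitrary: \<beta> \<gamma> i)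
  case Nil
  then show ?case
    by (simp add: carry_count_def sum_bitvecs_0 xor_add_eq_Nil carry_state_Nil omegas_def unit_vec_def)
next
  case (Cons a \<alpha>)
  obtain b \<beta>' g \<gamma>' where \<beta>: "\<beta> = b # \<beta>'" "length \<beta>' = length \<alpha>"
    and \<gamma>: "\<gamma> = g # \<gamma>'" "length \<gamma>' = length \<alpha>"
    using Cons.prems by (cases \<beta>; cases \<gamma>) auto
  have "carry_count s1 s2 s3 (a # \<alpha>) \<beta> \<gamma> i
      = (\<Sum>j<8. 4 * Amat (idx3 a b g) i j * carry_count s1 s2 s3 \<alpha> \<beta>' \<gamma>' j)"
    unfolding \<beta> \<gamma> using \<beta>(2) \<gamma>(2) Cons.prems(3) by (rule carry_count_Cons)
  also have "\<dots> = (\<Sum>j<8. 4 * Amat (idx3 a b g) i j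
                      * (4 ^ length \<alpha> * Aprod (omegas \<alpha> \<beta>' \<gamma>') (unit_vec (idx3 s1 s2 s3)) j))"
    using Cons.IH \<beta>(2) \<gamma>(2) by simp
  also have "\<dots> = 4 ^ length (a # \<alpha>) * Aprod (omegas (a # \<alpha>) \<beta> \<gamma>) (unit_vec (idx3 s1 s2 s3)) i"
    by (simp add: \<beta> \<gamma> omegas_Cons sum_distrib_left mult_ac)
  finally show ?case .
qed

lemma Amat_xor: "Amat (xor k d) i j = Amat k (xor i d) (xor j d)"
  by (simp add: Amat_def ac_simps)

lemma xor_less_8: "(i::nat) < 8 \<Longrightarrow> d < 8 \<Longrightarrow> xor i d < 8"
  unfolding less_8_cases by (elim disjE) simp_all

lemma sum_lessThan_8_xor: "(d::nat) < 8 \<Longrightarrow> (\<Sum>j<8. f (xor j d)) = (\<Sum>j<8. f j)"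
  by (rule sum.reindex_bij_witness [where i = "\<lambda>j. xor j d" and j = "\<lambda>j. xor j d"])
     (simp_all add: xor.assoc xor_less_8)

lemma Aprod_xor:
  assumes "(d::nat) < 8"
  shows "Aprod (map (\<lambda>k. xor k d) ks) (\<lambda>i. v (xor i d)) i = Aprod ks v (xor i d)"
proof (induction ks arbitrary: i)
  case Nil
  then show ?case by simp
next
  case (Cons k ks)
  have "Aprod (map (\<lambda>k. xor k d) (k # ks)) (\<lambda>i. v (xor i d)) i
      = (\<Sum>j<8. Amat k (xor i d) (xor j d) * Aprod ks v (xor j d))"
    by (simp add: Cons.IH Amat_xor)
  also have "\<dots> = Aprod (k # ks) v (xor i d)"
    using sum_lessThan_8_xor [OF assms, of "\<lambda>j. Amat k (xor i d) j * Aprod ks v j"] by simp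
  finally show ?case .
qed

lemma Aprod_unit_vec:
  assumes "s < 8"
  shows "Aprod ks (unit_vec s) i = Aprod_e0 (map (\<lambda>k. xor k s) ks) (xor i s)"
proof -
  have "(\<lambda>i. unit_vec 0 (xor i s)) = unit_vec s"
    by (auto simp: unit_vec_def fun_eq_iff) (metis xor.assoc xor.right_neutral xor_self_eq)
  then show ?thesis
    using Aprod_xor [OF assms, of "map (\<lambda>k. xor k s) ks" "unit_vec 0" i]
    by (simp add: Aprod_e0_eq_Aprod comp_def xor.assoc)
qed

lemma bv_cond_not_eq_map: "bv_cond_not x p = map (\<lambda>b. b \<noteq> p) x"
  by (simp add: bv_cond_not_def bv_not_def)

lemma omegas_bv_cond_not:
  assumes "length \<beta> = length \<alpha>" "length \<gamma> = length \<alpha>"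
  shows "omegas (bv_cond_not \<alpha> p) (bv_cond_not \<beta> q) (bv_cond_not \<gamma> s)
           = map (\<lambda>k. xor k (idx3 p q s)) (omegas \<alpha> \<beta> \<gamma>)"
  using assms by (simp add: omegas_eq bv_cond_not_eq_map idx3_xor [symmetric])

text \<open>A carry-in s can be traded for complementing the inputs, provided the weight L does
  not distinguish carry states that differ by s.\<close>
lemma weighted_count:
  assumes "length \<beta> = length \<alpha>" "length \<gamma> = length \<alpha>"
    and "\<And>i. i < 8 \<Longrightarrow> L ! xor i (idx3 s1 s2 s3) = L ! i"
  shows "(\<Sum>x\<in>bitvecs (length \<alpha>). \<Sum>y\<in>bitvecs (length \<alpha>).
            L ! carry_state s1 s2 s3 \<alpha> \<beta> \<gamma> x y * of_bool (xor_add_eq s1 s2 s3 \<alpha> \<beta> \<gamma> x y))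
       = 4 ^ length \<alpha> * (\<Sum>i<8. L ! i * Aprod_e0
            (omegas (bv_cond_not \<alpha> s1) (bv_cond_not \<beta> s2) (bv_cond_not \<gamma> s3)) i)"
proof -
  define s where "s = idx3 s1 s2 s3"
  define ks where "ks = map (\<lambda>k. xor k s) (omegas \<alpha> \<beta> \<gamma>)"
  have s: "s < 8"
    by (simp add: s_def idx3_less)
  have "(\<Sum>x\<in>bitvecs (length \<alpha>). \<Sum>y\<in>bitvecs (length \<alpha>).
            L ! carry_state s1 s2 s3 \<alpha> \<beta> \<gamma> x y * of_bool (xor_add_eq s1 s2 s3 \<alpha> \<beta> \<gamma> x y))
      = (\<Sum>x\<in>bitvecs (length \<alpha>). \<Sum>y\<in>bitvecs (length \<alpha>). \<Sum>i<8. L ! i *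
            of_bool (xor_add_eq s1 s2 s3 \<alpha> \<beta> \<gamma> x y \<and> carry_state s1 s2 s3 \<alpha> \<beta> \<gamma> x y = i))"
    by (intro sum.cong refl) (simp only: sum_lessThan_8_of_bool_eq [OF carry_state_less])
  also have "\<dots> = (\<Sum>i<8. L ! i * carry_count s1 s2 s3 \<alpha> \<beta> \<gamma> i)"
    unfolding carry_count_def sum_distrib_left
    by (subst sum.swap, subst (2) sum.swap) (rule refl)
  also have "\<dots> = 4 ^ length \<alpha> * (\<Sum>i<8. L ! xor i s * Aprod_e0 ks (xor i s))"
    using assms by (simp add: carry_count_eq_Aprod Aprod_unit_vec s sum_distrib_left mult_ac
                     flip: s_def ks_def)
  also have "\<dots> = 4 ^ length \<alpha> * (\<Sum>i<8. L ! i * Aprod_e0 ks i)"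
    using sum_lessThan_8_xor [OF s, of "\<lambda>i. L ! i * Aprod_e0 ks i"] by simp
  finally show ?thesis
    using assms(1,2) by (simp add: ks_def s_def omegas_bv_cond_not)
qed

lemma Aprod_append: "Aprod (ks @ ls) v = Aprod ks (Aprod ls v)"
  by (induction ks) simp_all

lemma Aprod_eq_0: "(\<And>j. j < 8 \<Longrightarrow> v j = 0) \<Longrightarrow> i < 8 \<Longrightarrow> Aprod ks v i = 0"
  by (induction ks arbitrary: i) simp_all

lemma Amat_col_0_odd: "j < 8 \<Longrightarrow> (a \<noteq> b) \<noteq> g \<Longrightarrow> Amat (idx3 a b g) j 0 = 0"
  unfolding less_8_cases
  by (cases a; cases b; cases g; elim disjE) (simp_all add: Amat_def A0_def A0_rows_def)

lemma Aprod_e0_omegas_eq_0: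
  assumes "length \<beta> = length \<alpha>" "length \<gamma> = length \<alpha>" "\<alpha> \<noteq> []"
    and "(last \<alpha> \<noteq> last \<beta>) \<noteq> last \<gamma>" and "i < 8"
  shows "Aprod_e0 (omegas \<alpha> \<beta> \<gamma>) i = 0"
proof -
  obtain k where k: "length \<alpha> = Suc k"
    using assms(3) by (cases "length \<alpha>") auto
  let ?ks = "map (\<lambda>i. idx3 (\<alpha> ! i) (\<beta> ! i) (\<gamma> ! i)) [0..<k]"
  have "omegas \<alpha> \<beta> \<gamma> = ?ks @ [idx3 (last \<alpha>) (last \<beta>) (last \<gamma>)]"
    using assms(1-3) k by (simp add: omegas_eq last_conv_nth flip: length_greater_0_conv)
  moreover have "Aprod [idx3 (last \<alpha>) (last \<beta>) (last \<gamma>)] (unit_vec 0) j = 0" if "j < 8" for j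
    using Amat_col_0_odd [OF that assms(4)] by (simp add: unit_vec_def if_distrib cong: if_cong)
  ultimately show ?thesis
    by (simp add: Aprod_e0_eq_Aprod Aprod_append Aprod_eq_0 assms(5))
qed

lemma padp_bv_cond_not_eq_0:
  assumes "length \<beta> = length \<alpha>" "length \<gamma> = length \<alpha>" "\<alpha> \<noteq> []"
    and "c \<noteq> ((last \<alpha> \<noteq> last \<beta>) \<noteq> last \<gamma>)"
  shows "padp p q \<alpha> \<beta> (bv_cond_not \<gamma> c) = 0"
proof -
  have "\<gamma> \<noteq> []"
    using assms(2,3) by auto
  then have "Aprod_e0 (omegas \<alpha> \<beta> (bv_cond_not \<gamma> c)) i = 0" if "i < 8" for i
    using assms that by (intro Aprod_e0_omegas_eq_0) (auto simp: bv_cond_not_eq_map last_map)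
  then show ?thesis
    by (simp add: padp_def)
qed

lemma cadp_bv_cond_not_eq_0:
  assumes "length \<beta> = length \<alpha>" "length \<gamma> = length \<alpha>" "\<alpha> \<noteq> []"
    and "(p \<noteq> q) \<noteq> ((last \<alpha> \<noteq> last \<beta>) \<noteq> last \<gamma>)"
  shows "cadp c (bv_cond_not \<alpha> p) (bv_cond_not \<beta> q) \<gamma> = 0"
proof -
  have "\<beta> \<noteq> []"
    using assms(1,3) by auto
  then have "Aprod_e0 (omegas (bv_cond_not \<alpha> p) (bv_cond_not \<beta> q) \<gamma>) i = 0" if "i < 8" for i
    using assms that by (intro Aprod_e0_omegas_eq_0) (auto simp: bv_cond_not_eq_map last_map)
  then show ?thesis
    by (simp add: cadp_def)
qed

lemma Lab_idx3: "Lab p q ! idx3 t1 t2 t3 = of_bool (t1 = p \<and> t2 = q)"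
  by (cases p; cases q; cases t1; cases t2; cases t3) (simp_all add: Lab_def)

lemma Lc_idx3: "Lc c ! idx3 t1 t2 t3 = of_bool (t3 = c)"
  by (cases c; cases t1; cases t2; cases t3) (simp_all add: Lc_def)

lemma Lab_xor_invariant: "i < 8 \<Longrightarrow> Lab p q ! xor i (idx3 False False c) = Lab p q ! i"
  unfolding less_8_cases by (cases p; cases q; cases c; elim disjE) (simp_all add: Lab_def)

lemma Lc_xor_invariant: "i < 8 \<Longrightarrow> Lc c ! xor i (idx3 p q False) = Lc c ! i"
  unfolding less_8_cases by (cases p; cases q; cases c; elim disjE) (simp_all add: Lc_def)

lemma rotated_equation_split:
  assumes "length x = m" "length y = m" "length \<alpha> = m" "length \<beta> = m" "length \<gamma> = m"
    and "length x' = r" "length y' = r" "length \<alpha>' = r" "length \<beta>' = r" "length \<gamma>' = r"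
  shows "bv_rotl (bv_xor (bv_add (r + m) (x' @ x) (\<alpha>' @ \<alpha>)) (bv_add (r + m) (y' @ y) (\<beta>' @ \<beta>))) r
           = bv_add (r + m) (bv_rotl (bv_xor (x' @ x) (y' @ y)) r) (\<gamma> @ \<gamma>')
     \<longleftrightarrow> xor_add_eq False False (carry_out (bv_xor x' y') \<gamma>' False) \<alpha> \<beta> \<gamma> x y
         \<and> xor_add_eq (carry_out x \<alpha> False) (carry_out y \<beta> False) False \<alpha>' \<beta>' \<gamma>' x' y'"
proof -
  have rotl: "bv_rotl (u @ v) r = v @ u" if "length u = r" for u v :: "bool list"
    using that rotate_append [of u v] by (simp add: bv_rotl_def)
  have "bv_add (r + m) (x' @ x) (\<alpha>' @ \<alpha>) = add_carry x' \<alpha>' (carry_out x \<alpha> False) @ add_carry x \<alpha> False"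
    and "bv_add (r + m) (y' @ y) (\<beta>' @ \<beta>) = add_carry y' \<beta>' (carry_out y \<beta> False) @ add_carry y \<beta> False"
    and "bv_add (r + m) (bv_xor x y @ bv_xor x' y') (\<gamma> @ \<gamma>')
           = add_carry (bv_xor x y) \<gamma> (carry_out (bv_xor x' y') \<gamma>' False) @ add_carry (bv_xor x' y') \<gamma>' False"
    using assms by (simp_all add: bv_add_eq_add_carry add_carry_append)
  then show ?thesis
    using assms by (simp add: bv_xor_append rotl xor_add_eq_def append_eq_append_conv)
qed

lemma sum_UNIV_bool_triple:
  "(\<Sum>c\<in>(UNIV :: (bool \<times> bool \<times> bool) set). f c) = (\<Sum>c1\<in>UNIV. \<Sum>c2\<in>UNIV. \<Sum>c3\<in>UNIV. f (c1, c2, c3))"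
  by (simp add: sum.cartesian_product flip: UNIV_Times_UNIV del: UNIV_Times_UNIV)

lemma adpXR_eq_sum_over_carries:
  assumes "length \<alpha> = m" "length \<beta> = m" "length \<gamma> = m"
    and "length \<alpha>' = r" "length \<beta>' = r" "length \<gamma>' = r"
  shows "adpXR (r + m) r (\<alpha>' @ \<alpha>) (\<beta>' @ \<beta>) (\<gamma> @ \<gamma>')
           = (\<Sum>(c1, c2, c3)\<in>UNIV. padp c1 c2 \<alpha> \<beta> (bv_cond_not \<gamma> c3)
                                  * cadp c3 (bv_cond_not \<alpha>' c1) (bv_cond_not \<beta>' c2) \<gamma>')"
proof -
  let ?Q = "\<lambda>X Y. bv_rotl (bv_xor (bv_add (r + m) X (\<alpha>' @ \<alpha>)) (bv_add (r + m) Y (\<beta>' @ \<beta>))) r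
                   = bv_add (r + m) (bv_rotl (bv_xor X Y) r) (\<gamma> @ \<gamma>')"
  \<comment> \<open>Lab c1 c2 and Lc c3 are indicators of the carries passed between the halves
     (see Lab_idx3 and Lc_idx3).\<close>
  define low where "low c1 c2 c3 x y = Lab c1 c2 ! carry_state False False c3 \<alpha> \<beta> \<gamma> x y
      * of_bool (xor_add_eq False False c3 \<alpha> \<beta> \<gamma> x y)" for c1 c2 c3 x y
  define high where "high c1 c2 c3 x y = Lc c3 ! carry_state c1 c2 False \<alpha>' \<beta>' \<gamma>' x y
      * of_bool (xor_add_eq c1 c2 False \<alpha>' \<beta>' \<gamma>' x y)" for c1 c2 c3 x y
  have pointwise: "of_bool (?Q (x' @ x) (y' @ y))
      = (\<Sum>(c1, c2, c3)\<in>UNIV. low c1 c2 c3 x y * high c1 c2 c3 x' y')"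
    if "x \<in> bitvecs m" "y \<in> bitvecs m" "x' \<in> bitvecs r" "y' \<in> bitvecs r" for x y x' y'
    using that assms
    by (simp add: rotated_equation_split bitvecs_def sum_UNIV_bool_triple UNIV_bool low_def high_def
        carry_state_def Lab_idx3 Lc_idx3)
  have "adpXR (r + m) r (\<alpha>' @ \<alpha>) (\<beta>' @ \<beta>) (\<gamma> @ \<gamma>')
      = (\<Sum>X\<in>bitvecs (r + m). \<Sum>Y\<in>bitvecs (r + m). of_bool (?Q X Y)) / 4 ^ (r + m)"
    unfolding adpXR_def card_pairs_eq_sum by simp
  also have "(\<Sum>X\<in>bitvecs (r + m). \<Sum>Y\<in>bitvecs (r + m). of_bool (?Q X Y))
      = (\<Sum>x'\<in>bitvecs r. \<Sum>y'\<in>bitvecs r. \<Sum>x\<in>bitvecs m. \<Sum>y\<in>bitvecs m.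
           of_bool (?Q (x' @ x) (y' @ y)))"
    unfolding sum_bitvecs_append by (rule sum.cong [OF refl], rule sum.swap)
  also have "\<dots> = (\<Sum>(c1, c2, c3)\<in>UNIV.
      (\<Sum>x\<in>bitvecs m. \<Sum>y\<in>bitvecs m. low c1 c2 c3 x y) * (\<Sum>x'\<in>bitvecs r. \<Sum>y'\<in>bitvecs r. high c1 c2 c3 x' y'))"
    by (simp only: pointwise sum.swap [where B = "UNIV :: (bool \<times> bool \<times> bool) set"]
          sum_distrib_left sum_distrib_right split_def cong: sum.cong)
  also have "\<dots> = (\<Sum>(c1, c2, c3)\<in>UNIV.
      4 ^ m * padp c1 c2 \<alpha> \<beta> (bv_cond_not \<gamma> c3) * (4 ^ r * cadp c3 (bv_cond_not \<alpha>' c1) (bv_cond_not \<beta>' c2) \<gamma>'))"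
    using assms weighted_count [of \<beta> \<alpha> \<gamma> "Lab _ _"] weighted_count [of \<beta>' \<alpha>' \<gamma>' "Lc _"]
    by (simp add: low_def high_def padp_def cadp_def Lab_xor_invariant Lc_xor_invariant bv_cond_not_def)
  finally show ?thesis
    by (simp add: power_add sum_divide_distrib case_prod_beta)
qed

theorem corollary2:
  fixes n r :: nat and \<alpha> \<beta> \<gamma> \<alpha>' \<beta>' \<gamma>' :: "bool list" and a a' :: bool
  assumes "n \<ge> 2" and "1 \<le> r" and "r \<le> n - 1"
    and "length \<alpha> = n - r" and "length \<beta> = n - r" and "length \<gamma> = n - r"
    and "length \<alpha>' = r" and "length \<beta>' = r" and "length \<gamma>' = r"
    and "a = ((\<alpha> ! (n - r - 1) \<noteq> \<beta> ! (n - r - 1)) \<noteq> \<gamma> ! (n - r - 1))"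
    and "a' = ((\<alpha>' ! (r - 1) \<noteq> \<beta>' ! (r - 1)) \<noteq> \<gamma>' ! (r - 1))"
  shows "adpXR n r (\<alpha>' @ \<alpha>) (\<beta>' @ \<beta>) (\<gamma> @ \<gamma>')
     = padp a' False \<alpha> \<beta> (bv_cond_not \<gamma> a) * cadp a (bv_cond_not \<alpha>' a') \<beta>' \<gamma>'
       + padp (\<not> a') True \<alpha> \<beta> (bv_cond_not \<gamma> a)
           * cadp a (bv_cond_not (bv_not \<alpha>') a') (bv_not \<beta>') \<gamma>'"
proof -
  define m where "m = n - r"
  have n: "n = r + m" and lengths: "length \<alpha> = m" "length \<beta> = m" "length \<gamma> = m"
    using assms(1-6) by (simp_all add: m_def)
  have nonempty: "\<alpha> \<noteq> []" "\<beta> \<noteq> []" "\<gamma> \<noteq> []" "\<alpha>' \<noteq> []" "\<beta>' \<noteq> []" "\<gamma>' \<noteq> []"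
    using assms(1-9) by auto
  have parities: "a = ((last \<alpha> \<noteq> last \<beta>) \<noteq> last \<gamma>)" "a' = ((last \<alpha>' \<noteq> last \<beta>') \<noteq> last \<gamma>')"
    using assms(4-11) nonempty by (simp_all add: last_conv_nth)
  have low_0: "c \<noteq> a \<Longrightarrow> padp p q \<alpha> \<beta> (bv_cond_not \<gamma> c) = 0" for p q c
    using assms(4-6) nonempty(1) parities(1) by (intro padp_bv_cond_not_eq_0) auto
  have high_0: "(p \<noteq> q) \<noteq> a' \<Longrightarrow> cadp c (bv_cond_not \<alpha>' p) (bv_cond_not \<beta>' q) \<gamma>' = 0" for p q c
    using assms(7-9) nonempty(4) parities(2) by (intro cadp_bv_cond_not_eq_0) auto
  show ?thesis
    unfolding n adpXR_eq_sum_over_carries [OF lengths assms(7-9)]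
    by (cases a; cases a'; simp add: sum_UNIV_bool_triple UNIV_bool low_0 high_0;
        simp add: bv_cond_not_def bv_not_def comp_def)
qed

end
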